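(* Let $q\ge2$, let $(\varepsilon_t)_{t\in\mathbb Z}$ be i.i.d. with a continuous distribution, and $X_t=\sum_{l=0}^q\varepsilon_{t-l}$. For OPs of length $m=3$: (i) for every $2\le k\le q-1$ and all $i,j$, $p_{ij}(k)=p_ip_j$; (ii) $p_{ij}(k)=p_ip_j$ for $k\ge q+3$; (iii) the probabilities $p_{ij}(1)$, $p_{ij}(q)$, $p_{ij}(q+1)$, $p_{ij}(q+2)$ do not depend on $q$ (for fixed innovation distribution). Consequently, the long-run covariance matrix $\Sigma$ is the same for all $q\ge2$.
   Context: $\Pi_t$ is the OP of $(X_t,X_{t+1},X_{t+2})$, i.e. the permutation $\pi\in S_3$ with $\pi^{(j)}<\pi^{(k)}\iff X_{t+j-1}<X_{t+k-1}$; OPs in lexicographic order are $\pi_1=(1,2,3)$, $\pi_2=(1,3,2)$, $\pi_3=(2,1,3)$, $\pi_4=(2,3,1)$, $\pi_5=(3,1,2)$, $\pi_6=(3,2,1)$. $p_i=\mathbb P(\Pi_0=\pi_i)$, $p_{ij}(k)=\mathbb P(\Pi_0=\pi_i,\Pi_k=\pi_j)$, and $\Sigma=(\sigma_{ij})$ with $\sigma_{ij}=p_i(\delta_{ij}-p_j)+\sum_{k=1}^\infty(p_{ij}(k)+p_{ji}(k)-2p_ip_j)$. *)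

theory Defs
  imports "HOL-Probability.Probability"
begin

text \<open>Ordinal patterns of length 3, in lexicographic order pi_1,...,pi_6
  (index i ranges over 1..6).\<close>
definition op_pats :: "nat list list" where
  "op_pats = [[1,2,3],[1,3,2],[2,1,3],[2,3,1],[3,1,2],[3,2,1]]"

definition op_pat :: "nat \<Rightarrow> nat list" where
  "op_pat i = op_pats ! (i - 1)"

definition has_op :: "nat list \<Rightarrow> real list \<Rightarrow> bool" where
  "has_op \<pi> x \<longleftrightarrow> (\<forall>j<3. \<forall>k<3. \<pi> ! j < \<pi> ! k \<longleftrightarrow> x ! j < x ! k)"

definition MA :: "nat \<Rightarrow> (int \<Rightarrow> 'a \<Rightarrow> real) \<Rightarrow> int \<Rightarrow> 'a \<Rightarrow> real" where
  "MA q \<epsilon> t \<omega> = (\<Sum>l\<le>q. \<epsilon> (t - int l) \<omega>)"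

definition op_event :: "'a measure \<Rightarrow> (int \<Rightarrow> 'a \<Rightarrow> real) \<Rightarrow> nat \<Rightarrow> int \<Rightarrow> nat \<Rightarrow> 'a set" where
  "op_event M \<epsilon> q t i = {\<omega> \<in> space M.
     has_op (op_pat i) [MA q \<epsilon> t \<omega>, MA q \<epsilon> (t+1) \<omega>, MA q \<epsilon> (t+2) \<omega>]}"

definition p1 :: "'a measure \<Rightarrow> (int \<Rightarrow> 'a \<Rightarrow> real) \<Rightarrow> nat \<Rightarrow> nat \<Rightarrow> real" where
  "p1 M \<epsilon> q i = measure M (op_event M \<epsilon> q 0 i)"

definition p2 :: "'a measure \<Rightarrow> (int \<Rightarrow> 'a \<Rightarrow> real) \<Rightarrow> nat \<Rightarrow> nat \<Rightarrow> nat \<Rightarrow> nat \<Rightarrow> real" where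
  "p2 M \<epsilon> q i j k = measure M (op_event M \<epsilon> q 0 i \<inter> op_event M \<epsilon> q (int k) j)"

definition Sigma :: "'a measure \<Rightarrow> (int \<Rightarrow> 'a \<Rightarrow> real) \<Rightarrow> nat \<Rightarrow> nat \<Rightarrow> nat \<Rightarrow> real" where
  "Sigma M \<epsilon> q i j =
     p1 M \<epsilon> q i * ((if i = j then 1 else 0) - p1 M \<epsilon> q j)
     + (\<Sum>k. p2 M \<epsilon> q i j (Suc k) + p2 M \<epsilon> q j i (Suc k)
             - 2 * p1 M \<epsilon> q i * p1 M \<epsilon> q j)"

definition iid_continuous :: "'a measure \<Rightarrow> (int \<Rightarrow> 'a \<Rightarrow> real) \<Rightarrow> bool" where
  "iid_continuous M \<epsilon> \<longleftrightarrow> prob_space M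
     \<and> prob_space.indep_vars M (\<lambda>_. borel) \<epsilon> UNIV
     \<and> (\<forall>t. distr M borel (\<epsilon> t) = distr M borel (\<epsilon> 0))
     \<and> (\<forall>x. measure (distr M borel (\<epsilon> 0)) {x} = 0)"

end

theory Submission
  imports Defs
begin

text \<open>The pattern of (X(t), X(t+1), X(t+2)) only depends on the increments
  X(t+1) - X(t) = \<epsilon>(t+1) - \<epsilon>(t-q) and X(t+2) - X(t) = \<epsilon>(t+1) + \<epsilon>(t+2) - \<epsilon>(t-q) - \<epsilon>(t+1-q),
  i.e. on the four innovations at times t-q, t+1-q, t+1, t+2. For q \<ge> 2 the quadruples
  belonging to \<Pi>(0) and \<Pi>(k) are disjoint unless k \<in> {1, q, q+1, q+2}, which gives independence
  at all other lags. For each of these four lags, the innovations involved, read in temporal order,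
  overlap in a way that does not depend on q, so the joint probability is the product measure of
  one fixed set. Hence \<Sigma> reduces to four lags whose terms do not depend on q.\<close>

lemma (in prob_space) prob_Int_restrict_indep:
  assumes indep: "indep_vars N X I" and disj: "A \<inter> B = {}" "A \<subseteq> I" "B \<subseteq> I"
    and P: "Measurable.pred (PiM A N) P" and Q: "Measurable.pred (PiM B N) Q"
  shows "prob ({\<omega> \<in> space M. P (\<lambda>i\<in>A. X i \<omega>)} \<inter> {\<omega> \<in> space M. Q (\<lambda>i\<in>B. X i \<omega>)})
       = prob {\<omega> \<in> space M. P (\<lambda>i\<in>A. X i \<omega>)} * prob {\<omega> \<in> space M. Q (\<lambda>i\<in>B. X i \<omega>)}"
proof -
  let ?SA = "{x \<in> space (PiM A N). P x}" and ?SB = "{x \<in> space (PiM B N). Q x}"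
  have rv: "random_variable (N i) (X i)" if "i \<in> I" for i
    using indep that by (simp add: indep_vars_def)
  have space: "(\<lambda>i\<in>A. X i \<omega>) \<in> space (PiM A N)" "(\<lambda>i\<in>B. X i \<omega>) \<in> space (PiM B N)"
    if "\<omega> \<in> space M" for \<omega>
    using that disj measurable_space[OF rv] by (auto simp: space_PiM)
  have "prob ((\<lambda>\<omega>. (\<lambda>i\<in>A. X i \<omega>, \<lambda>i\<in>B. X i \<omega>)) -` (?SA \<times> ?SB) \<inter> space M)
      = prob ((\<lambda>\<omega>. \<lambda>i\<in>A. X i \<omega>) -` ?SA \<inter> space M) * prob ((\<lambda>\<omega>. \<lambda>i\<in>B. X i \<omega>) -` ?SB \<inter> space M)"
    using P Q by (intro indep_varD[OF indep_var_restrict[OF indep disj]]) (simp_all add: pred_def)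
  moreover have "(\<lambda>\<omega>. (\<lambda>i\<in>A. X i \<omega>, \<lambda>i\<in>B. X i \<omega>)) -` (?SA \<times> ?SB) \<inter> space M
      = {\<omega> \<in> space M. P (\<lambda>i\<in>A. X i \<omega>)} \<inter> {\<omega> \<in> space M. Q (\<lambda>i\<in>B. X i \<omega>)}"
    "(\<lambda>\<omega>. \<lambda>i\<in>A. X i \<omega>) -` ?SA \<inter> space M = {\<omega> \<in> space M. P (\<lambda>i\<in>A. X i \<omega>)}"
    "(\<lambda>\<omega>. \<lambda>i\<in>B. X i \<omega>) -` ?SB \<inter> space M = {\<omega> \<in> space M. Q (\<lambda>i\<in>B. X i \<omega>)}"
    using space by auto
  ultimately show ?thesis by simp
qed

lemma (in prob_space) distr_iid_reindex:
  fixes X :: "'i \<Rightarrow> 'a \<Rightarrow> 'b" and g :: "'j \<Rightarrow> 'i"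
  assumes indep: "indep_vars (\<lambda>_. N) X UNIV" and ident: "\<And>t. distr M N (X t) = \<mu>"
    and inj: "inj_on g I" and ne: "I \<noteq> {}"
  shows "distr M (PiM I (\<lambda>_. N)) (\<lambda>\<omega>. \<lambda>i\<in>I. X (g i) \<omega>) = PiM I (\<lambda>_. \<mu>)"
proof -
  let ?K = "g ` I"
  define Y where "Y = (\<lambda>\<omega>. \<lambda>s\<in>?K. X s \<omega>)"
  define R where "R = (\<lambda>x. \<lambda>i\<in>I. x (g i) :: 'b)"
  have rv: "\<And>t. random_variable N (X t)" using indep by (simp add: indep_vars_def)
  have sets_\<mu>: "sets \<mu> = sets N" using ident[of undefined] by auto
  have "prob_space \<mu>" using ident[of undefined] by (auto intro: prob_space_distr rv)
  have Y: "Y \<in> M \<rightarrow>\<^sub>M PiM ?K (\<lambda>_. N)"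
    unfolding Y_def by (intro measurable_restrict rv)
  have R: "R \<in> PiM ?K (\<lambda>_. N) \<rightarrow>\<^sub>M PiM I (\<lambda>_. N)"
    unfolding R_def by (intro measurable_restrict measurable_component_singleton) auto
  have "distr M (PiM ?K (\<lambda>_. N)) Y = PiM ?K (\<lambda>s. distr M N (X s))"
    unfolding Y_def using indep_vars_subset[OF indep] ne
    by (subst indep_vars_iff_distr_eq_PiM[symmetric]) (auto intro: rv)
  also have "\<dots> = PiM ?K (\<lambda>_. \<mu>)" by (simp add: ident)
  finally have distr_Y: "distr M (PiM ?K (\<lambda>_. N)) Y = PiM ?K (\<lambda>_. \<mu>)" .
  have "distr M (PiM I (\<lambda>_. N)) (\<lambda>\<omega>. \<lambda>i\<in>I. X (g i) \<omega>) = distr M (PiM I (\<lambda>_. N)) (R \<circ> Y)"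
    by (intro distr_cong) (auto simp: R_def Y_def fun_eq_iff)
  also have "\<dots> = distr (PiM ?K (\<lambda>_. \<mu>)) (PiM I (\<lambda>_. N)) R"
    using distr_distr[OF R Y] distr_Y by simp
  also have "\<dots> = distr (PiM ?K (\<lambda>_. \<mu>)) (PiM I (\<lambda>_. \<mu>)) R"
    using sets_\<mu> by (intro distr_cong sets_PiM_cong) auto
  also have "\<dots> = PiM I (\<lambda>_. \<mu>)"
    unfolding R_def using distr_PiM_reindex[of ?K "\<lambda>_. \<mu>" g I] \<open>prob_space \<mu>\<close> inj by simp
  finally show ?thesis .
qed

lemma (in prob_space) prob_iid_reindex:
  assumes "indep_vars (\<lambda>_. N) X UNIV" "\<And>t. distr M N (X t) = \<mu>" "inj_on g I" "I \<noteq> {}"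
    and P: "Measurable.pred (PiM I (\<lambda>_. N)) P"
  shows "prob {\<omega> \<in> space M. P (\<lambda>i\<in>I. X (g i) \<omega>)} = measure (PiM I (\<lambda>_. \<mu>)) {x \<in> space (PiM I (\<lambda>_. N)). P x}"
proof -
  have rv: "random_variable (PiM I (\<lambda>_. N)) (\<lambda>\<omega>. \<lambda>i\<in>I. X (g i) \<omega>)"
    using assms(1) by (intro measurable_restrict) (simp add: indep_vars_def)
  have "{\<omega> \<in> space M. P (\<lambda>i\<in>I. X (g i) \<omega>)}
      = (\<lambda>\<omega>. \<lambda>i\<in>I. X (g i) \<omega>) -` {x \<in> space (PiM I (\<lambda>_. N)). P x} \<inter> space M"
    using measurable_space[OF rv] by auto
  then show ?thesis
    using measure_distr[OF rv P[unfolded pred_def]] distr_iid_reindex[OF assms(1-4)] by simp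
qed

definition iid_prob :: "real measure \<Rightarrow> nat \<Rightarrow> ((nat \<Rightarrow> real) \<Rightarrow> bool) \<Rightarrow> real" where
  "iid_prob \<mu> n P = measure (PiM {..<n} (\<lambda>_. \<mu>)) {x \<in> space (PiM {..<n} (\<lambda>_. borel)). P x}"

lemma prob_innovations_eq_iid_prob:
  fixes M :: "'a measure" and e :: "int \<Rightarrow> 'a \<Rightarrow> real"
  assumes iid: "iid_continuous M e" and L: "distinct L" "L \<noteq> []"
    and P: "Measurable.pred (PiM {..<length L} (\<lambda>_. borel)) P"
  shows "measure M {\<omega> \<in> space M. P (\<lambda>m\<in>{..<length L}. e (L ! m) \<omega>)}
       = iid_prob (distr M borel (e 0)) (length L) P"
proof -
  interpret prob_space M using iid by (simp add: iid_continuous_def)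
  show ?thesis
    unfolding iid_prob_def using iid L
    by (intro prob_iid_reindex P) (auto simp: iid_continuous_def inj_on_nth)
qed

lemma has_op_3_iff: "has_op \<pi> [a, b, c] \<longleftrightarrow>
   ((\<pi>!0 < \<pi>!1) \<longleftrightarrow> a < b) \<and> ((\<pi>!0 < \<pi>!2) \<longleftrightarrow> a < c) \<and> ((\<pi>!1 < \<pi>!0) \<longleftrightarrow> b < a) \<and>
   ((\<pi>!1 < \<pi>!2) \<longleftrightarrow> b < c) \<and> ((\<pi>!2 < \<pi>!0) \<longleftrightarrow> c < a) \<and> ((\<pi>!2 < \<pi>!1) \<longleftrightarrow> c < b)"
proof -
  have "(\<forall>j<3. P j) \<longleftrightarrow> P 0 \<and> P 1 \<and> P (2::nat)" for P
    by (auto simp: numeral_3_eq_3 numeral_2_eq_2 less_Suc_eq)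
  then show ?thesis unfolding has_op_def by auto
qed

lemma has_op_translate: "has_op \<pi> [a, b, c] \<longleftrightarrow> has_op \<pi> [0, b - a, c - a]"
  unfolding has_op_3_iff by auto

lemma MA_step: "MA q e (t + 1) \<omega> = MA q e t \<omega> + e (t + 1) \<omega> - e (t - int q) \<omega>"
proof (induction q)
  case (Suc q)
  then show ?case by (simp add: MA_def algebra_simps)
qed (simp add: MA_def)

text \<open>The arguments a, b, c, d stand for the innovations at times t - q, t + 1 - q, t + 1, t + 2.\<close>
definition has_op_innov :: "nat list \<Rightarrow> real \<Rightarrow> real \<Rightarrow> real \<Rightarrow> real \<Rightarrow> bool" where
  "has_op_innov \<pi> a b c d \<longleftrightarrow> has_op \<pi> [0, c - a, c + d - a - b]"

lemma pred_has_op_innov: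
  assumes [measurable]: "a \<in> borel_measurable N" "b \<in> borel_measurable N"
    "c \<in> borel_measurable N" "d \<in> borel_measurable N"
  shows "Measurable.pred N (\<lambda>x. has_op_innov \<pi> (a x) (b x) (c x) (d x))"
  unfolding has_op_innov_def has_op_3_iff by measurable

lemma op_event_innovations:
  "op_event M e q t i = {\<omega> \<in> space M.
     has_op_innov (op_pat i) (e (t - int q) \<omega>) (e (t + 1 - int q) \<omega>) (e (t + 1) \<omega>) (e (t + 2) \<omega>)}"
proof -
  have incr1: "MA q e (t + 1) \<omega> - MA q e t \<omega> = e (t + 1) \<omega> - e (t - int q) \<omega>" for \<omega>
    using MA_step[of q e t \<omega>] by simp
  have incr2: "MA q e (t + 2) \<omega> - MA q e t \<omega>
      = e (t + 1) \<omega> + e (t + 2) \<omega> - e (t - int q) \<omega> - e (t + 1 - int q) \<omega>" for \<omega>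
    using MA_step[of q e t \<omega>] MA_step[of q e "t + 1" \<omega>] by (simp add: algebra_simps)
  show ?thesis
    unfolding op_event_def has_op_innov_def
    by (intro Collect_cong conj_cong refl) (subst has_op_translate, simp only: incr1 incr2)
qed

lemma prob_op_event:
  fixes M :: "'a measure" and e :: "int \<Rightarrow> 'a \<Rightarrow> real"
  assumes iid: "iid_continuous M e" and q: "q \<ge> 1"
  shows "measure M (op_event M e q t i)
       = iid_prob (distr M borel (e 0)) 4 (\<lambda>x. has_op_innov (op_pat i) (x 0) (x 1) (x 2) (x 3))"
proof -
  define L where "L = [t - int q, t + 1 - int q, t + 1, t + 2]"
  define P where "P = (\<lambda>x::nat \<Rightarrow> real. has_op_innov (op_pat i) (x 0) (x 1) (x 2) (x 3))"
  have "op_event M e q t i = {\<omega> \<in> space M. P (\<lambda>m\<in>{..<length L}. e (L ! m) \<omega>)}"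
    unfolding op_event_innovations P_def L_def by simp
  moreover have "Measurable.pred (PiM {..<length L} (\<lambda>_. borel)) P"
    unfolding P_def L_def by (intro pred_has_op_innov measurable_component_singleton) auto
  moreover have "distinct L" "L \<noteq> []" "length L = 4" using q by (simp_all add: L_def)
  ultimately show ?thesis
    unfolding P_def[symmetric] using prob_innovations_eq_iid_prob[OF iid, of L P] by simp
qed

lemma p2_eq_p1_mult:
  fixes M :: "'a measure" and e :: "int \<Rightarrow> 'a \<Rightarrow> real"
  assumes iid: "iid_continuous M e" and q: "q \<ge> 1" and k: "2 \<le> k \<and> k < q \<or> q + 3 \<le> k"
  shows "p2 M e q i j k = p1 M e q i * p1 M e q j"
proof -
  interpret prob_space M using iid by (simp add: iid_continuous_def)
  have indep: "indep_vars (\<lambda>_. borel) e UNIV" using iid by (simp add: iid_continuous_def)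
  define A where "A = {- int q, 1 - int q, 1, 2}"
  define B where "B = {int k - int q, int k + 1 - int q, int k + 1, int k + 2}"
  define P where "P = (\<lambda>x. has_op_innov (op_pat i) (x (- int q)) (x (1 - int q)) (x 1) (x 2))"
  define Q where "Q = (\<lambda>x. has_op_innov (op_pat j)
    (x (int k - int q)) (x (int k + 1 - int q)) (x (int k + 1)) (x (int k + 2)))"
  have "op_event M e q 0 i = {\<omega> \<in> space M. P (\<lambda>s\<in>A. e s \<omega>)}"
    unfolding op_event_innovations P_def A_def by simp
  moreover have "op_event M e q (int k) j = {\<omega> \<in> space M. Q (\<lambda>s\<in>B. e s \<omega>)}"
    unfolding op_event_innovations Q_def B_def by simp
  moreover have "A \<inter> B = {}" using k q by (auto simp: A_def B_def)
  moreover have "Measurable.pred (PiM A (\<lambda>_. borel)) P" "Measurable.pred (PiM B (\<lambda>_. borel)) Q"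
    unfolding P_def Q_def A_def B_def
    by (intro pred_has_op_innov measurable_component_singleton; simp)+
  ultimately have "p2 M e q i j k = measure M (op_event M e q 0 i) * measure M (op_event M e q (int k) j)"
    unfolding p2_def by (simp add: prob_Int_restrict_indep[OF indep])
  then show ?thesis
    unfolding p1_def using prob_op_event[OF iid q] by simp
qed

lemma p2_eq_iid_prob:
  fixes M :: "'a measure" and e :: "int \<Rightarrow> 'a \<Rightarrow> real"
  assumes iid: "iid_continuous M e" and L: "distinct L" "length L = n" "n > 0"
    and P: "Measurable.pred (PiM {..<n} (\<lambda>_. borel)) P"
    and events: "\<And>\<omega>. has_op_innov (op_pat i) (e (- int q) \<omega>) (e (1 - int q) \<omega>) (e 1 \<omega>) (e 2 \<omega>)
       \<and> has_op_innov (op_pat j) (e (int k - int q) \<omega>) (e (int k + 1 - int q) \<omega>) (e (int k + 1) \<omega>) (e (int k + 2) \<omega>)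
       \<longleftrightarrow> P (\<lambda>m\<in>{..<n}. e (L ! m) \<omega>)"
  shows "p2 M e q i j k = iid_prob (distr M borel (e 0)) n P"
proof -
  have "op_event M e q 0 i \<inter> op_event M e q (int k) j = {\<omega> \<in> space M. P (\<lambda>m\<in>{..<length L}. e (L ! m) \<omega>)}"
    unfolding op_event_innovations L(2) events[symmetric] by auto
  then show ?thesis
    unfolding p2_def using prob_innovations_eq_iid_prob[OF iid, of L P] L P by auto
qed

lemma p2_lag_1:
  fixes M :: "'a measure" and e :: "int \<Rightarrow> 'a \<Rightarrow> real"
  assumes iid: "iid_continuous M e" and q: "q \<ge> 2"
  shows "p2 M e q i j 1 = iid_prob (distr M borel (e 0)) 6 (\<lambda>x.
    has_op_innov (op_pat i) (x 0) (x 1) (x 3) (x 4) \<and> has_op_innov (op_pat j) (x 1) (x 2) (x 4) (x 5))"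
proof (rule p2_eq_iid_prob[OF iid, where L = "[- int q, 1 - int q, 2 - int q, 1, 2, 3]"])
  show "distinct [- int q, 1 - int q, 2 - int q, 1, 2, 3]" using q by auto
qed (auto simp: algebra_simps intro!: pred_intros_logic pred_has_op_innov measurable_component_singleton)

lemma p2_lag_q:
  fixes M :: "'a measure" and e :: "int \<Rightarrow> 'a \<Rightarrow> real"
  assumes iid: "iid_continuous M e" and q: "q \<ge> 2"
  shows "p2 M e q i j q = iid_prob (distr M borel (e 0)) 7 (\<lambda>x.
    has_op_innov (op_pat i) (x 0) (x 1) (x 3) (x 4) \<and> has_op_innov (op_pat j) (x 2) (x 3) (x 5) (x 6))"
proof (rule p2_eq_iid_prob[OF iid, where L = "[- int q, 1 - int q, 0, 1, 2, int q + 1, int q + 2]"])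
  show "distinct [- int q, 1 - int q, 0, 1, 2, int q + 1, int q + 2]" using q by auto
qed (auto simp: algebra_simps intro!: pred_intros_logic pred_has_op_innov measurable_component_singleton)

lemma p2_lag_q_plus_1:
  fixes M :: "'a measure" and e :: "int \<Rightarrow> 'a \<Rightarrow> real"
  assumes iid: "iid_continuous M e" and q: "q \<ge> 2"
  shows "p2 M e q i j (q + 1) = iid_prob (distr M borel (e 0)) 6 (\<lambda>x.
    has_op_innov (op_pat i) (x 0) (x 1) (x 2) (x 3) \<and> has_op_innov (op_pat j) (x 2) (x 3) (x 4) (x 5))"
proof (rule p2_eq_iid_prob[OF iid, where L = "[- int q, 1 - int q, 1, 2, int q + 2, int q + 3]"])
  show "distinct [- int q, 1 - int q, 1, 2, int q + 2, int q + 3]" using q by auto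
qed (auto simp: algebra_simps intro!: pred_intros_logic pred_has_op_innov measurable_component_singleton)

lemma p2_lag_q_plus_2:
  fixes M :: "'a measure" and e :: "int \<Rightarrow> 'a \<Rightarrow> real"
  assumes iid: "iid_continuous M e" and q: "q \<ge> 2"
  shows "p2 M e q i j (q + 2) = iid_prob (distr M borel (e 0)) 7 (\<lambda>x.
    has_op_innov (op_pat i) (x 0) (x 1) (x 2) (x 3) \<and> has_op_innov (op_pat j) (x 3) (x 4) (x 5) (x 6))"
proof (rule p2_eq_iid_prob[OF iid, where L = "[- int q, 1 - int q, 1, 2, 3, int q + 3, int q + 4]"])
  show "distinct [- int q, 1 - int q, 1, 2, 3, int q + 3, int q + 4]" using q by auto
qed (auto simp: algebra_simps intro!: pred_intros_logic pred_has_op_innov measurable_component_singleton)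

lemma Sigma_eq_sum_overlapping_lags:
  fixes M :: "'a measure" and e :: "int \<Rightarrow> 'a \<Rightarrow> real" and i j :: nat
  assumes iid: "iid_continuous M e" and q: "q \<ge> 2"
  defines "c \<equiv> \<lambda>k. p2 M e q i j k + p2 M e q j i k - 2 * p1 M e q i * p1 M e q j"
  shows "Sigma M e q i j = p1 M e q i * ((if i = j then 1 else 0) - p1 M e q j)
    + (c 1 + c q + c (q + 1) + c (q + 2))"
proof -
  have "c (Suc n) = 0" if "n \<notin> {0, q - 1, q, q + 1}" for n
  proof -
    have "2 \<le> Suc n \<and> Suc n < q \<or> q + 3 \<le> Suc n" using that q by auto
    then show ?thesis using p2_eq_p1_mult[OF iid] q by (simp add: c_def)
  qed
  then have "(\<Sum>n. c (Suc n)) = (\<Sum>n\<in>{0, q - 1, q, q + 1}. c (Suc n))"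
    by (intro suminf_finite) auto
  also have "\<dots> = c 1 + c q + c (q + 1) + c (q + 2)"
  proof -
    obtain r where "q = Suc (Suc r)" using q by (metis add_2_eq_Suc le_Suc_ex)
    then show ?thesis by (simp add: add.assoc)
  qed
  finally show ?thesis unfolding Sigma_def c_def by simp
qed

theorem mainTheorem15:
  fixes M1 :: "'a measure" and \<epsilon>1 :: "int \<Rightarrow> 'a \<Rightarrow> real"
    and M2 :: "'b measure" and \<epsilon>2 :: "int \<Rightarrow> 'b \<Rightarrow> real"
    and q1 q2 :: nat
  assumes "iid_continuous M1 \<epsilon>1" and "iid_continuous M2 \<epsilon>2"
    and same_dist: "distr M1 borel (\<epsilon>1 0) = distr M2 borel (\<epsilon>2 0)"
    and "q1 \<ge> 2" and "q2 \<ge> 2"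
  shows
    "(\<forall>i\<in>{1..6}. \<forall>j\<in>{1..6}. \<forall>k. 2 \<le> k \<and> k \<le> q1 - 1 \<longrightarrow>
        p2 M1 \<epsilon>1 q1 i j k = p1 M1 \<epsilon>1 q1 i * p1 M1 \<epsilon>1 q1 j)
   \<and> (\<forall>i\<in>{1..6}. \<forall>j\<in>{1..6}. \<forall>k. k \<ge> q1 + 3 \<longrightarrow>
        p2 M1 \<epsilon>1 q1 i j k = p1 M1 \<epsilon>1 q1 i * p1 M1 \<epsilon>1 q1 j)
   \<and> (\<forall>i\<in>{1..6}. \<forall>j\<in>{1..6}.
        p2 M1 \<epsilon>1 q1 i j 1 = p2 M2 \<epsilon>2 q2 i j 1
      \<and> p2 M1 \<epsilon>1 q1 i j q1 = p2 M2 \<epsilon>2 q2 i j q2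
      \<and> p2 M1 \<epsilon>1 q1 i j (q1 + 1) = p2 M2 \<epsilon>2 q2 i j (q2 + 1)
      \<and> p2 M1 \<epsilon>1 q1 i j (q1 + 2) = p2 M2 \<epsilon>2 q2 i j (q2 + 2))
   \<and> (\<forall>i\<in>{1..6}. \<forall>j\<in>{1..6}. Sigma M1 \<epsilon>1 q1 i j = Sigma M2 \<epsilon>2 q2 i j)"
proof -
  note iid = assms(1,2) and q = assms(4,5)
  have indep_lags: "p2 M1 \<epsilon>1 q1 i j k = p1 M1 \<epsilon>1 q1 i * p1 M1 \<epsilon>1 q1 j"
    if "2 \<le> k \<and> k \<le> q1 - 1 \<or> k \<ge> q1 + 3" for i j k
    using that q by (intro p2_eq_p1_mult[OF iid(1)]) auto
  have p1_eq: "p1 M1 \<epsilon>1 q1 i = p1 M2 \<epsilon>2 q2 i" for i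
    using q prob_op_event[OF iid(1), of q1] prob_op_event[OF iid(2), of q2] by (simp add: p1_def same_dist)
  have p2_eq: "p2 M1 \<epsilon>1 q1 i j 1 = p2 M2 \<epsilon>2 q2 i j 1
      \<and> p2 M1 \<epsilon>1 q1 i j q1 = p2 M2 \<epsilon>2 q2 i j q2
      \<and> p2 M1 \<epsilon>1 q1 i j (q1 + 1) = p2 M2 \<epsilon>2 q2 i j (q2 + 1)
      \<and> p2 M1 \<epsilon>1 q1 i j (q1 + 2) = p2 M2 \<epsilon>2 q2 i j (q2 + 2)" for i j
    unfolding p2_lag_1[OF iid(1) q(1)] p2_lag_q[OF iid(1) q(1)] p2_lag_q_plus_1[OF iid(1) q(1)]
      p2_lag_q_plus_2[OF iid(1) q(1)] p2_lag_1[OF iid(2) q(2)] p2_lag_q[OF iid(2) q(2)]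
      p2_lag_q_plus_1[OF iid(2) q(2)] p2_lag_q_plus_2[OF iid(2) q(2)] same_dist
    by simp
  have "Sigma M1 \<epsilon>1 q1 i j = Sigma M2 \<epsilon>2 q2 i j" for i j
    unfolding Sigma_eq_sum_overlapping_lags[OF iid(1) q(1)] Sigma_eq_sum_overlapping_lags[OF iid(2) q(2)]
    using p2_eq[of i j] p2_eq[of j i] p1_eq[of i] p1_eq[of j] by simp
  with indep_lags p2_eq show ?thesis by auto
qed

end
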